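(* Let $0<\alpha<1$, $0<\beta<\infty$, $u\in H(\mathbb{D})$ and $\varphi\in S(\mathbb{D})$. Then the weighted composition operator $uC_\varphi$ maps $\mathcal{B}^\alpha$ boundedly into $\mathcal{Z}_\beta$ if and only if $u\in\mathcal{Z}_\beta$ and $$\sup_{z\in\mathbb{D}}\frac{(1-|z|^2)^\beta|2u'(z)\varphi'(z)+u(z)\varphi''(z)|}{(1-|\varphi(z)|^2)^\alpha}\asymp\sup_{n\ge0}(n+1)^\alpha\|(2u'\varphi'+u\varphi'')\varphi^n\|_{\nu_\beta}<\infty,$$ $$\sup_{z\in\mathbb{D}}\frac{(1-|z|^2)^\beta|u(z)\varphi'(z)^2|}{(1-|\varphi(z)|^2)^{\alpha+1}}\asymp\sup_{n\ge0}(n+1)^{\alpha+1}\|u(\varphi')^2\varphi^n\|_{\nu_\beta}<\infty.$$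
   Context: $\mathbb{D}$ is the open unit disk in $\mathbb{C}$, $H(\mathbb{D})$ the space of holomorphic functions on $\mathbb{D}$, and $S(\mathbb{D})$ the set of holomorphic self-maps of $\mathbb{D}$. For $u\in H(\mathbb{D})$, $\varphi\in S(\mathbb{D})$, the weighted composition operator is $uC_\varphi f(z)=u(z)f(\varphi(z))$. For $\alpha>0$, the Bloch type space $\mathcal{B}^\alpha$ consists of $f\in H(\mathbb{D})$ with $\sup_{z\in\mathbb{D}}(1-|z|^2)^\alpha|f'(z)|<\infty$, normed by $\|f\|_{\mathcal{B}_\alpha}=|f(0)|+\sup_{z}(1-|z|^2)^\alpha|f'(z)|$. For $\beta>0$, the Zygmund type space $\mathcal{Z}_\beta$ consists of $f\in H(\mathbb{D})$ with $\sup_z(1-|z|^2)^\beta|f''(z)|<\infty$, normed by $\|f\|_{\mathcal{Z}_\beta}=|f(0)|+|f'(0)|+\sup_z(1-|z|^2)^\beta|f''(z)|$. For a holomorphic function $g$ on $\mathbb{D}$, $\|g\|_{\nu_\beta}=\sup_{z\in\mathbb{D}}(1-|z|^2)^\beta|g(z)|$; $\varphi^n$ denotes the $n$-th power of $\varphi$. $A\asymp B$ means $B/C\le A\le CB$ for a positive constant $C$ (independent of $u,\varphi$). *)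

theory Defs
  imports "HOL-Complex_Analysis.Complex_Analysis"
begin

abbreviation unit_disc :: "complex set" where
  "unit_disc \<equiv> ball 0 1"

definition self_map_disc :: "(complex \<Rightarrow> complex) \<Rightarrow> bool" where
  "self_map_disc \<phi> \<longleftrightarrow> \<phi> holomorphic_on unit_disc \<and> \<phi> ` unit_disc \<subseteq> unit_disc"

definition bloch_type :: "real \<Rightarrow> (complex \<Rightarrow> complex) set" where
  "bloch_type \<alpha> = {f. f holomorphic_on unit_disc \<and>
     bdd_above ((\<lambda>z. (1 - (cmod z)\<^sup>2) powr \<alpha> * cmod (deriv f z)) ` unit_disc)}"

definition bloch_norm :: "real \<Rightarrow> (complex \<Rightarrow> complex) \<Rightarrow> real" where
  "bloch_norm \<alpha> f = cmod (f 0) +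
     (SUP z\<in>unit_disc. (1 - (cmod z)\<^sup>2) powr \<alpha> * cmod (deriv f z))"

definition zygmund_type :: "real \<Rightarrow> (complex \<Rightarrow> complex) set" where
  "zygmund_type \<beta> = {f. f holomorphic_on unit_disc \<and>
     bdd_above ((\<lambda>z. (1 - (cmod z)\<^sup>2) powr \<beta> * cmod (deriv (deriv f) z)) ` unit_disc)}"

definition zygmund_norm :: "real \<Rightarrow> (complex \<Rightarrow> complex) \<Rightarrow> real" where
  "zygmund_norm \<beta> f = cmod (f 0) + cmod (deriv f 0) +
     (SUP z\<in>unit_disc. (1 - (cmod z)\<^sup>2) powr \<beta> * cmod (deriv (deriv f) z))"

definition wcomp :: "(complex \<Rightarrow> complex) \<Rightarrow> (complex \<Rightarrow> complex) \<Rightarrow> (complex \<Rightarrow> complex) \<Rightarrow> (complex \<Rightarrow> complex)" where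
  "wcomp u \<phi> f = (\<lambda>z. u z * f (\<phi> z))"

definition wcomp_bounded_BZ :: "real \<Rightarrow> real \<Rightarrow> (complex \<Rightarrow> complex) \<Rightarrow> (complex \<Rightarrow> complex) \<Rightarrow> bool" where
  "wcomp_bounded_BZ \<alpha> \<beta> u \<phi> \<longleftrightarrow>
     (\<exists>C. \<forall>f\<in>bloch_type \<alpha>. wcomp u \<phi> f \<in> zygmund_type \<beta> \<and>
          zygmund_norm \<beta> (wcomp u \<phi> f) \<le> C * bloch_norm \<alpha> f)"

definition nu_norm :: "real \<Rightarrow> (complex \<Rightarrow> complex) \<Rightarrow> ereal" where
  "nu_norm \<beta> g = (SUP z\<in>unit_disc. ereal ((1 - (cmod z)\<^sup>2) powr \<beta> * cmod (g z)))"

definition g1 :: "(complex \<Rightarrow> complex) \<Rightarrow> (complex \<Rightarrow> complex) \<Rightarrow> complex \<Rightarrow> complex" where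
  "g1 u \<phi> z = 2 * deriv u z * deriv \<phi> z + u z * deriv (deriv \<phi>) z"

definition g2 :: "(complex \<Rightarrow> complex) \<Rightarrow> (complex \<Rightarrow> complex) \<Rightarrow> complex \<Rightarrow> complex" where
  "g2 u \<phi> z = u z * (deriv \<phi> z)\<^sup>2"

definition S1 :: "real \<Rightarrow> real \<Rightarrow> (complex \<Rightarrow> complex) \<Rightarrow> (complex \<Rightarrow> complex) \<Rightarrow> ereal" where
  "S1 \<alpha> \<beta> u \<phi> = (SUP z\<in>unit_disc.
      ereal ((1 - (cmod z)\<^sup>2) powr \<beta> * cmod (g1 u \<phi> z) / (1 - (cmod (\<phi> z))\<^sup>2) powr \<alpha>))"

definition T1 :: "real \<Rightarrow> real \<Rightarrow> (complex \<Rightarrow> complex) \<Rightarrow> (complex \<Rightarrow> complex) \<Rightarrow> ereal" where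
  "T1 \<alpha> \<beta> u \<phi> = (SUP n::nat. ereal ((real n + 1) powr \<alpha>) *
      nu_norm \<beta> (\<lambda>z. g1 u \<phi> z * (\<phi> z) ^ n))"

definition S2 :: "real \<Rightarrow> real \<Rightarrow> (complex \<Rightarrow> complex) \<Rightarrow> (complex \<Rightarrow> complex) \<Rightarrow> ereal" where
  "S2 \<alpha> \<beta> u \<phi> = (SUP z\<in>unit_disc.
      ereal ((1 - (cmod z)\<^sup>2) powr \<beta> * cmod (g2 u \<phi> z) / (1 - (cmod (\<phi> z))\<^sup>2) powr (\<alpha> + 1)))"

definition T2 :: "real \<Rightarrow> real \<Rightarrow> (complex \<Rightarrow> complex) \<Rightarrow> (complex \<Rightarrow> complex) \<Rightarrow> ereal" where
  "T2 \<alpha> \<beta> u \<phi> = (SUP n::nat. ereal ((real n + 1) powr (\<alpha> + 1)) *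
      nu_norm \<beta> (\<lambda>z. g2 u \<phi> z * (\<phi> z) ^ n))"

end

theory Submission
  imports Defs
begin

text \<open>For \<open>0 \<le> a \<le> 2\<close> and \<open>0 \<le> x < 1\<close>, \<open>(n + 1)\<^sup>a x\<^sup>n (1 - x\<^sup>2)\<^sup>a\<close> is at most \<open>16\<close> for every \<open>n\<close>
  and at least \<open>1/8\<close> for a suitable \<open>n\<close>; so the quotient suprema \<open>S\<^sub>i\<close> and the power suprema
  \<open>T\<^sub>i\<close> are comparable.

  The second derivative of \<open>uC\<^sub>\<phi>f\<close> is \<open>u''(f \<circ> \<phi>) + g\<^sub>1(f' \<circ> \<phi>) + g\<^sub>2(f'' \<circ> \<phi>)\<close>. For \<open>f\<close> in the
  Bloch type space with \<open>\<alpha> < 1\<close>, the values \<open>|f(w)|\<close>, \<open>(1 - |w|\<^sup>2)\<^sup>\<alpha> |f'(w)|\<close> and, by Cauchy's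
  estimate, \<open>(1 - |w|\<^sup>2)\<^sup>\<alpha>\<^sup>+\<^sup>1 |f''(w)|\<close> are bounded by multiples of the norm of \<open>f\<close>; this gives
  sufficiency. For necessity, the test function \<open>1\<close> gives \<open>u \<in> Z\<^sub>\<beta>\<close>, and the monomials \<open>z\<^sup>k\<^sup>+\<^sup>2\<close>,
  whose Bloch norms grow like \<open>k\<^sup>1\<^sup>-\<^sup>\<alpha>\<close>, bound \<open>(k + 2)\<^sup>\<alpha> |\<phi>|\<^sup>k |g\<^sub>1\<phi> + (k + 1) g\<^sub>2|\<close> uniformly in
  \<open>k\<close>. Comparing the indices \<open>n\<close> and \<open>2n\<close> for \<open>n \<approx> 1/(4(1 - |\<phi>(z)|))\<close> separates \<open>g\<^sub>1\<close>
  from \<open>g\<^sub>2\<close>.\<close>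

lemma power_weight_le:
  fixes a x :: real
  assumes a: "0 \<le> a" "a \<le> 2" and x: "0 \<le> x" "x < 1"
  shows "(real n + 1) powr a * x ^ n * (1 - x\<^sup>2) powr a \<le> 16"
proof -
  define t where "t = 1 - x"
  have t: "0 < t" "t \<le> 1" using x by (auto simp: t_def)
  define s where "s = real n * t"
  have s0: "0 \<le> s" using t by (simp add: s_def)
  have "x \<le> exp (-t)" using exp_ge_add_one_self[of "-t"] by (simp add: t_def)
  then have "x ^ n \<le> exp (-t) ^ n" using x by (intro power_mono) auto
  also have "\<dots> = exp (-s)" by (simp add: s_def exp_of_nat_mult[symmetric])
  finally have xn: "x ^ n \<le> exp (-s)" .
  have q0: "0 \<le> 1 - x\<^sup>2" using x by (simp add: power_le_one abs_square_le_1)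
  have "0 \<le> (1 - x)\<^sup>2" by simp
  then have "1 - x\<^sup>2 \<le> 2 * t" by (simp add: t_def power2_eq_square algebra_simps)
  then have "(real n + 1) * (1 - x\<^sup>2) \<le> 2 * (s + 1)"
    using t mult_left_mono[of "1 - x\<^sup>2" "2 * t" "real n + 1"] by (simp add: s_def algebra_simps)
  then have "(real n + 1) powr a * (1 - x\<^sup>2) powr a \<le> (2 * (s + 1)) powr a"
    using a q0 by (simp add: powr_mult[symmetric] powr_mono2)
  also have "\<dots> \<le> (2 * (s + 1)) powr 2" using a s0 by (intro powr_mono) auto
  also have "\<dots> = 4 * (s + 1)\<^sup>2" using s0 by (simp add: powr_numeral power2_eq_square algebra_simps)
  also have "\<dots> \<le> 4 * (2 * exp (s / 2))\<^sup>2"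
  proof -
    have "s + 1 \<le> 2 * exp (s / 2)" using exp_ge_add_one_self[of "s / 2"] s0 by linarith
    then show ?thesis using s0 by (intro mult_left_mono power_mono) auto
  qed
  also have "\<dots> = 16 * exp s" by (simp add: power2_eq_square exp_add[symmetric])
  finally have "(real n + 1) powr a * (1 - x\<^sup>2) powr a \<le> 16 * exp s" .
  from mult_mono[OF this xn] x have "(real n + 1) powr a * (1 - x\<^sup>2) powr a * x ^ n \<le> 16"
    by (simp add: exp_minus field_simps)
  then show ?thesis by (simp add: mult_ac)
qed

lemma exists_nat_mult_between:
  fixes t c :: real
  assumes "0 < t" "0 < c"
  obtains n :: nat where "real n * t \<le> c" "c \<le> (real n + 1) * t" "t \<le> c \<Longrightarrow> 1 \<le> n"
proof
  define n where "n = nat \<lfloor>c / t\<rfloor>"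
  have n: "real n = of_int \<lfloor>c / t\<rfloor>" using assms by (simp add: n_def)
  show "real n * t \<le> c" using n assms by (simp add: pos_le_divide_eq[symmetric])
  show "c \<le> (real n + 1) * t" using n assms
    by (simp add: pos_divide_less_eq[symmetric] less_imp_le)
  show "1 \<le> n" if "t \<le> c"
    using that assms by (simp add: n_def le_nat_iff)
qed

lemma exists_power_weight_ge:
  fixes a x :: real
  assumes a: "0 \<le> a" "a \<le> 2" and x: "0 \<le> x" "x < 1"
  obtains n :: nat where "1/8 \<le> (real n + 1) powr a * x ^ n * (1 - x\<^sup>2) powr a"
proof -
  define t where "t = 1 - x"
  have t: "0 < t" "t \<le> 1" using x by (auto simp: t_def)
  obtain n :: nat where n1: "real n * t \<le> 1/2" and n2: "1/2 \<le> (real n + 1) * t"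
    using exists_nat_mult_between[of t "1/2"] t by auto
  have "1 - real n * t \<le> x ^ n"
    using Bernoulli_inequality[of "-t" n] t by (simp add: t_def algebra_simps)
  then have xn: "1/2 \<le> x ^ n" using n1 by linarith
  have "t \<le> 1 - x\<^sup>2" using x by (simp add: t_def power2_eq_square mult_left_le_one_le)
  then have "(real n + 1) * t \<le> (real n + 1) * (1 - x\<^sup>2)" by (intro mult_left_mono) auto
  with n2 have "1/2 \<le> (real n + 1) * (1 - x\<^sup>2)" by linarith
  then have "(1/2) powr a \<le> ((real n + 1) * (1 - x\<^sup>2)) powr a" using a by (intro powr_mono2) auto
  moreover have "(1/2::real) powr 2 \<le> (1/2) powr a" using a by (intro powr_mono') auto
  ultimately have "1/4 \<le> (real n + 1) powr a * (1 - x\<^sup>2) powr a"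
    using x by (simp add: powr_mult power2_eq_square)
  from mult_mono[OF this xn] have "1/8 \<le> (real n + 1) powr a * x ^ n * (1 - x\<^sup>2) powr a"
    by (simp add: mult_ac)
  then show thesis by (rule that)
qed

section \<open>Quotient suprema and power suprema\<close>

definition weighted_quotient ::
    "real \<Rightarrow> real \<Rightarrow> (complex \<Rightarrow> complex) \<Rightarrow> (complex \<Rightarrow> complex) \<Rightarrow> complex \<Rightarrow> real" where
  "weighted_quotient a \<beta> g \<psi> z = (1 - (cmod z)\<^sup>2) powr \<beta> * cmod (g z) / (1 - (cmod (\<psi> z))\<^sup>2) powr a"

definition quotient_sup :: "real \<Rightarrow> real \<Rightarrow> (complex \<Rightarrow> complex) \<Rightarrow> (complex \<Rightarrow> complex) \<Rightarrow> ereal" where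
  "quotient_sup a \<beta> g \<psi> = (SUP z\<in>unit_disc. ereal (weighted_quotient a \<beta> g \<psi> z))"

definition power_sup :: "real \<Rightarrow> real \<Rightarrow> (complex \<Rightarrow> complex) \<Rightarrow> (complex \<Rightarrow> complex) \<Rightarrow> ereal" where
  "power_sup a \<beta> g \<psi> = (SUP n::nat. ereal ((real n + 1) powr a) * nu_norm \<beta> (\<lambda>z. g z * \<psi> z ^ n))"

lemma S1_eq_quotient_sup: "S1 \<alpha> \<beta> u \<phi> = quotient_sup \<alpha> \<beta> (g1 u \<phi>) \<phi>"
  by (simp add: S1_def quotient_sup_def weighted_quotient_def)

lemma S2_eq_quotient_sup: "S2 \<alpha> \<beta> u \<phi> = quotient_sup (\<alpha> + 1) \<beta> (g2 u \<phi>) \<phi>"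
  by (simp add: S2_def quotient_sup_def weighted_quotient_def)

lemma T1_eq_power_sup: "T1 \<alpha> \<beta> u \<phi> = power_sup \<alpha> \<beta> (g1 u \<phi>) \<phi>"
  by (simp add: T1_def power_sup_def)

lemma T2_eq_power_sup: "T2 \<alpha> \<beta> u \<phi> = power_sup (\<alpha> + 1) \<beta> (g2 u \<phi>) \<phi>"
  by (simp add: T2_def power_sup_def)

lemma quotient_sup_less_infinity_iff:
  "quotient_sup a \<beta> g \<psi> < \<infinity> \<longleftrightarrow> (\<exists>B. \<forall>z\<in>unit_disc. weighted_quotient a \<beta> g \<psi> z \<le> B)"
proof
  assume "quotient_sup a \<beta> g \<psi> < \<infinity>"
  moreover have "ereal (weighted_quotient a \<beta> g \<psi> z) \<le> quotient_sup a \<beta> g \<psi>" if "z \<in> unit_disc" for z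
    unfolding quotient_sup_def using that by (rule SUP_upper)
  ultimately show "\<exists>B. \<forall>z\<in>unit_disc. weighted_quotient a \<beta> g \<psi> z \<le> B"
    by (cases "quotient_sup a \<beta> g \<psi>") (fastforce dest: order.trans[OF _ order.strict_implies_order])+
next
  assume "\<exists>B. \<forall>z\<in>unit_disc. weighted_quotient a \<beta> g \<psi> z \<le> B"
  then obtain B where "\<forall>z\<in>unit_disc. weighted_quotient a \<beta> g \<psi> z \<le> B" by blast
  then have "quotient_sup a \<beta> g \<psi> \<le> ereal B" unfolding quotient_sup_def by (intro SUP_least) auto
  then show "quotient_sup a \<beta> g \<psi> < \<infinity>" using order.strict_trans1 by fastforce
qed

lemma quotient_sup_le_power_sup:
  assumes a: "0 \<le> a" "a \<le> 2" and \<psi>: "\<psi> ` unit_disc \<subseteq> unit_disc"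
  shows "quotient_sup a \<beta> g \<psi> \<le> ereal 16 * power_sup a \<beta> g \<psi>"
  unfolding quotient_sup_def
proof (rule SUP_least)
  fix z :: complex assume z: "z \<in> unit_disc"
  define v where "v = (1 - (cmod z)\<^sup>2) powr \<beta> * cmod (g z)"
  define x where "x = cmod (\<psi> z)"
  have x: "0 \<le> x" "x < 1" using \<psi> z by (auto simp: x_def image_subset_iff)
  have q: "0 < 1 - x\<^sup>2" using x by (simp add: power_less_one_iff abs_square_less_1)
  obtain n where n: "1/8 \<le> (real n + 1) powr a * x ^ n * (1 - x\<^sup>2) powr a"
    using exists_power_weight_ge[OF a x] .
  have "v \<le> v * (16 * ((real n + 1) powr a * x ^ n * (1 - x\<^sup>2) powr a))"
    using n mult_left_mono[of 1 _ v] by (simp add: v_def)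
  then have "v / (1 - x\<^sup>2) powr a \<le> v * (16 * ((real n + 1) powr a * x ^ n * (1 - x\<^sup>2) powr a)) / (1 - x\<^sup>2) powr a"
    by (rule divide_right_mono) simp
  also have "\<dots> = 16 * ((real n + 1) powr a * (v * x ^ n))" using q by simp
  finally have "ereal (weighted_quotient a \<beta> g \<psi> z) \<le> ereal 16 * (ereal ((real n + 1) powr a) * ereal (v * x ^ n))"
    by (simp add: weighted_quotient_def v_def x_def)
  also have "\<dots> \<le> ereal 16 * (ereal ((real n + 1) powr a) * nu_norm \<beta> (\<lambda>z. g z * \<psi> z ^ n))"
    unfolding nu_norm_def using z
    by (intro ereal_mult_left_mono SUP_upper2[of z]) (auto simp: v_def x_def norm_mult norm_power mult.assoc)
  also have "\<dots> \<le> ereal 16 * power_sup a \<beta> g \<psi>"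
    unfolding power_sup_def by (intro ereal_mult_left_mono SUP_upper) auto
  finally show "ereal (weighted_quotient a \<beta> g \<psi> z) \<le> ereal 16 * power_sup a \<beta> g \<psi>" .
qed

lemma power_sup_le_quotient_sup:
  assumes a: "0 \<le> a" "a \<le> 2" and \<psi>: "\<psi> ` unit_disc \<subseteq> unit_disc"
  shows "power_sup a \<beta> g \<psi> \<le> ereal 16 * quotient_sup a \<beta> g \<psi>"
  unfolding power_sup_def
proof (rule SUP_least)
  fix n :: nat
  have "ereal ((real n + 1) powr a) * ereal ((1 - (cmod z)\<^sup>2) powr \<beta> * cmod (g z * \<psi> z ^ n))
      \<le> ereal 16 * quotient_sup a \<beta> g \<psi>" if z: "z \<in> unit_disc" for z
  proof -
    define v where "v = (1 - (cmod z)\<^sup>2) powr \<beta> * cmod (g z)"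
    define x where "x = cmod (\<psi> z)"
    have x: "0 \<le> x" "x < 1" using \<psi> z by (auto simp: x_def image_subset_iff)
    have q: "0 < 1 - x\<^sup>2" using x by (simp add: power_less_one_iff abs_square_less_1)
    have "(real n + 1) powr a * x ^ n \<le> 16 / (1 - x\<^sup>2) powr a"
      using power_weight_le[OF a x, of n] q by (simp add: pos_le_divide_eq)
    then have "(real n + 1) powr a * (v * x ^ n) \<le> 16 * (v / (1 - x\<^sup>2) powr a)"
      using mult_left_mono[of _ _ v] by (fastforce simp: v_def algebra_simps)
    then have "ereal ((real n + 1) powr a) * ereal ((1 - (cmod z)\<^sup>2) powr \<beta> * cmod (g z * \<psi> z ^ n))
        \<le> ereal 16 * ereal (weighted_quotient a \<beta> g \<psi> z)"
      by (simp add: weighted_quotient_def v_def x_def norm_mult norm_power mult.assoc)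
    also have "\<dots> \<le> ereal 16 * quotient_sup a \<beta> g \<psi>"
      unfolding quotient_sup_def by (intro ereal_mult_left_mono SUP_upper z) auto
    finally show ?thesis .
  qed
  moreover have "ereal ((real n + 1) powr a) * nu_norm \<beta> (\<lambda>z. g z * \<psi> z ^ n) =
      (SUP z\<in>unit_disc. ereal ((real n + 1) powr a) * ereal ((1 - (cmod z)\<^sup>2) powr \<beta> * cmod (g z * \<psi> z ^ n)))"
    unfolding nu_norm_def by (rule SUP_ereal_mult_left[symmetric]) auto
  ultimately show "ereal ((real n + 1) powr a) * nu_norm \<beta> (\<lambda>z. g z * \<psi> z ^ n) \<le> ereal 16 * quotient_sup a \<beta> g \<psi>"
    by (auto intro: SUP_least)
qed

section \<open>Estimates in Bloch type spaces\<close>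

lemma disc_weight_pos: "w \<in> unit_disc \<Longrightarrow> 0 < 1 - (cmod w)\<^sup>2"
  by (simp add: power_less_one_iff abs_square_less_1)

definition bloch_seminorm :: "real \<Rightarrow> (complex \<Rightarrow> complex) \<Rightarrow> real" where
  "bloch_seminorm \<alpha> f = (SUP z\<in>unit_disc. (1 - (cmod z)\<^sup>2) powr \<alpha> * cmod (deriv f z))"

lemma bloch_norm_eq: "bloch_norm \<alpha> f = cmod (f 0) + bloch_seminorm \<alpha> f"
  by (simp add: bloch_norm_def bloch_seminorm_def)

lemma bloch_seminorm_upper:
  assumes "f \<in> bloch_type \<alpha>" "w \<in> unit_disc"
  shows "(1 - (cmod w)\<^sup>2) powr \<alpha> * cmod (deriv f w) \<le> bloch_seminorm \<alpha> f"
  using assms unfolding bloch_type_def bloch_seminorm_def by (auto intro: cSUP_upper)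

lemma bloch_seminorm_nonneg: "f \<in> bloch_type \<alpha> \<Longrightarrow> 0 \<le> bloch_seminorm \<alpha> f"
  by (rule order_trans[OF _ bloch_seminorm_upper[of f \<alpha> 0]]) auto

lemma bloch_seminorm_le_norm: "bloch_seminorm \<alpha> f \<le> bloch_norm \<alpha> f"
  by (simp add: bloch_norm_eq)

lemma bloch_deriv_le:
  assumes "f \<in> bloch_type \<alpha>" "w \<in> unit_disc"
  shows "cmod (deriv f w) \<le> bloch_seminorm \<alpha> f / (1 - (cmod w)\<^sup>2) powr \<alpha>"
  using bloch_seminorm_upper[OF assms] disc_weight_pos[OF assms(2)]
  by (simp add: pos_le_divide_eq mult.commute)

text \<open>Cauchy's estimate for \<open>f'\<close> on the circle of radius \<open>(1 - |w|)/2\<close> about \<open>w\<close>.\<close>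
lemma bloch_second_deriv_le:
  assumes \<alpha>: "0 \<le> \<alpha>" "\<alpha> \<le> 1" and f: "f \<in> bloch_type \<alpha>" and w: "w \<in> unit_disc"
  shows "(1 - (cmod w)\<^sup>2) powr (\<alpha> + 1) * cmod (deriv (deriv f) w) \<le> 16 * bloch_seminorm \<alpha> f"
proof -
  define r where "r = cmod w"
  define \<rho> where "\<rho> = (1 - r) / 2"
  define q where "q = 1 - r\<^sup>2"
  define M where "M = bloch_seminorm \<alpha> f"
  have M0: "0 \<le> M" using bloch_seminorm_nonneg[OF f] by (simp add: M_def)
  have r: "0 \<le> r" "r < 1" using w by (auto simp: r_def)
  have \<rho>: "0 < \<rho>" using r by (simp add: \<rho>_def)
  have q: "0 < q" using disc_weight_pos[OF w] by (simp add: q_def r_def)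
  have "0 \<le> (1 - r) * (1 - r)" by simp
  then have q4: "q \<le> 4 * \<rho>"
    using r by (simp add: q_def \<rho>_def power2_eq_square algebra_simps mult_left_le_one_le)
  have P: "0 < q powr \<alpha>" using q by simp
  have sub: "cball w \<rho> \<subseteq> unit_disc"
  proof
    fix x assume "x \<in> cball w \<rho>"
    then have "cmod x \<le> r + \<rho>"
      using norm_triangle_ineq2[of x w] by (auto simp: dist_norm r_def norm_minus_commute)
    then show "x \<in> unit_disc" using r by (simp add: \<rho>_def field_simps)
  qed
  have hf': "deriv f holomorphic_on unit_disc"
    using f by (auto simp: bloch_type_def intro: holomorphic_deriv)
  have B: "cmod (deriv f x) \<le> 4 * M / q powr \<alpha>" if x: "norm (w - x) = \<rho>" for x
  proof -
    have xD: "x \<in> unit_disc" using sub x by (auto simp: dist_norm)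
    have "cmod x \<le> r + \<rho>" using norm_triangle_ineq2[of x w] x by (auto simp: r_def norm_minus_commute)
    then have "\<rho> \<le> 1 - cmod x" by (simp add: \<rho>_def field_simps)
    also have "\<dots> \<le> 1 - (cmod x)\<^sup>2" using xD by (simp add: power2_eq_square mult_left_le_one_le)
    finally have "q / 4 \<le> 1 - (cmod x)\<^sup>2" using q4 by simp
    then have "(q / 4) powr \<alpha> \<le> (1 - (cmod x)\<^sup>2) powr \<alpha>" using q \<alpha> by (intro powr_mono2) auto
    moreover have "(q / 4) powr \<alpha> = q powr \<alpha> * (1/4) powr \<alpha>" using q by (simp add: powr_mult[symmetric])
    moreover have "(1/4::real) powr 1 \<le> (1/4) powr \<alpha>" using \<alpha> by (intro powr_mono') auto
    then have "q powr \<alpha> * (1/4) \<le> q powr \<alpha> * (1/4) powr \<alpha>" using P by (intro mult_left_mono) auto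
    ultimately have L: "q powr \<alpha> / 4 \<le> (1 - (cmod x)\<^sup>2) powr \<alpha>" by simp
    have "cmod (deriv f x) \<le> M / (1 - (cmod x)\<^sup>2) powr \<alpha>"
      using bloch_deriv_le[OF f xD] by (simp add: M_def)
    also have "\<dots> \<le> M / (q powr \<alpha> / 4)"
      using L M0 P disc_weight_pos[OF xD] by (intro divide_left_mono) auto
    finally show ?thesis by (simp add: mult.commute)
  qed
  have "norm ((deriv ^^ 1) (deriv f) w) \<le> fact 1 * (4 * M / q powr \<alpha>) / \<rho> ^ 1"
  proof (rule Cauchy_inequality[OF _ _ \<rho> B])
    show "deriv f holomorphic_on ball w \<rho>"
      using hf' sub ball_subset_cball by (blast intro: holomorphic_on_subset)
    show "continuous_on (cball w \<rho>) (deriv f)"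
      using holomorphic_on_imp_continuous_on[OF hf'] sub by (blast intro: continuous_on_subset)
  qed
  then have "cmod (deriv (deriv f) w) \<le> (4 * M / q powr \<alpha>) / \<rho>" by simp
  also have "\<dots> \<le> (4 * M / q powr \<alpha>) / (q / 4)"
    using q4 q P M0 by (intro divide_left_mono) auto
  finally have "q powr \<alpha> * q * cmod (deriv (deriv f) w) \<le> 16 * M"
    using q P by (simp add: field_simps)
  then show ?thesis using q by (simp add: powr_add M_def q_def r_def)
qed

lemma has_real_derivative_powr_majorant:
  fixes \<alpha> r t :: real
  assumes "\<alpha> < 1" "0 < 1 - t * r"
  shows "((\<lambda>t. - ((1 - t * r) powr (1 - \<alpha>)) / (1 - \<alpha>)) has_real_derivative r * (1 - t * r) powr (- \<alpha>)) (at t)"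
proof -
  have "((\<lambda>t. 1 - t * r) has_real_derivative - r) (at t)" by (auto intro!: derivative_eq_intros)
  from DERIV_chain2[OF has_real_derivative_powr[OF assms(2), of "1 - \<alpha>"] this]
  have "((\<lambda>t. (1 - t * r) powr (1 - \<alpha>)) has_real_derivative (1 - \<alpha>) * (1 - t * r) powr (- \<alpha>) * - r) (at t)"
    by simp
  from DERIV_cdivide[OF DERIV_minus[OF this], of "1 - \<alpha>"] show ?thesis
    using assms(1) by (simp add: mult_ac)
qed

text \<open>Integrate the bound on \<open>f'\<close> along the radius \<open>[0, w]\<close>.\<close>
lemma bloch_growth_le:
  assumes \<alpha>: "0 \<le> \<alpha>" "\<alpha> < 1" and f: "f \<in> bloch_type \<alpha>" and w: "w \<in> unit_disc"
  shows "cmod (f w - f 0) \<le> bloch_seminorm \<alpha> f / (1 - \<alpha>)"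
proof -
  define r where "r = cmod w"
  define M where "M = bloch_seminorm \<alpha> f"
  have M0: "0 \<le> M" using bloch_seminorm_nonneg[OF f] by (simp add: M_def)
  have r: "0 \<le> r" "r < 1" using w by (auto simp: r_def)
  have hf: "f holomorphic_on unit_disc" using f by (simp add: bloch_type_def)
  define F where "F = (\<lambda>t::real. f (of_real t * w))"
  define F' where "F' = (\<lambda>t::real. deriv f (of_real t * w) * w)"
  define G where "G = (\<lambda>t::real. M * (- ((1 - t * r) powr (1 - \<alpha>)) / (1 - \<alpha>)))"
  define G' where "G' = (\<lambda>t::real. M * (r * (1 - t * r) powr (- \<alpha>)))"
  have tr: "t * r \<le> r" "0 < 1 - t * r" if "0 \<le> t" "t \<le> 1" for t
    using that r mult_left_le_one_le[of r t] by auto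
  have inD: "of_real t * w \<in> unit_disc" if "0 \<le> t" "t \<le> 1" for t
    using tr[OF that] that by (simp add: norm_mult r_def)
  have dF: "(F has_vector_derivative F' t) (at t)" if "0 \<le> t" "t \<le> 1" for t
  proof -
    have "(f has_field_derivative deriv f (of_real t * w)) (at (of_real t * w))"
      using holomorphic_derivI[OF hf _ inD[OF that]] by simp
    moreover have "((\<lambda>\<zeta>. \<zeta> * w) has_field_derivative w) (at (of_real t))"
      by (auto intro!: derivative_eq_intros)
    ultimately have "((\<lambda>\<zeta>. f (\<zeta> * w)) has_field_derivative F' t) (at (of_real t))"
      using DERIV_chain2[where g = "\<lambda>\<zeta>. \<zeta> * w"] by (simp add: F'_def)
    then show ?thesis unfolding F_def by (rule has_vector_derivative_real_field)
  qed
  have dG: "(G has_vector_derivative G' t) (at t)" if "0 \<le> t" "t \<le> 1" for t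
    using DERIV_cmult[OF has_real_derivative_powr_majorant[OF \<alpha>(2) tr(2)[OF that]], of M]
    by (simp add: G_def G'_def has_real_derivative_iff_has_vector_derivative)
  have bnd: "norm (F' t) \<le> G' t" if "0 < t" "t < 1" for t
  proof -
    have t: "0 \<le> t" "t \<le> 1" using that by auto
    have "(t * r) * (t * r) \<le> t * r" using tr[OF t] t r by (intro mult_left_le_one_le) auto
    then have le: "1 - t * r \<le> 1 - (cmod (of_real t * w))\<^sup>2"
      using t by (simp add: norm_mult r_def power2_eq_square)
    have "cmod (deriv f (of_real t * w)) \<le> M / (1 - (cmod (of_real t * w))\<^sup>2) powr \<alpha>"
      using bloch_deriv_le[OF f inD[OF t]] by (simp add: M_def)
    also have "\<dots> \<le> M / (1 - t * r) powr \<alpha>"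
      using M0 tr[OF t] le \<alpha> by (intro divide_left_mono powr_mono2 mult_pos_pos) auto
    finally have "cmod (deriv f (of_real t * w)) * r \<le> M / (1 - t * r) powr \<alpha> * r"
      using r by (intro mult_right_mono) auto
    then show ?thesis by (simp add: F'_def G'_def norm_mult r_def powr_minus divide_inverse mult_ac)
  qed
  have "continuous_on {0..1} F" "continuous_on {0..1} G"
    using dF dG by (auto intro!: continuous_at_imp_continuous_on has_vector_derivative_continuous)
  then have "norm (F 1 - F 0) \<le> G 1 - G 0"
    using dF dG bnd by (intro differentiable_bound_general[where f' = F' and \<phi>' = G']) auto
  also have "\<dots> = M / (1 - \<alpha>) * (1 - (1 - r) powr (1 - \<alpha>))"
    by (simp add: G_def algebra_simps)
  also have "\<dots> \<le> M / (1 - \<alpha>)" using \<alpha> M0 r by (intro mult_left_le) auto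
  finally show ?thesis by (simp add: F_def M_def)
qed

lemma bloch_value_le:
  assumes \<alpha>: "0 \<le> \<alpha>" "\<alpha> < 1" and f: "f \<in> bloch_type \<alpha>" and w: "w \<in> unit_disc"
  shows "cmod (f w) \<le> (1 + 1 / (1 - \<alpha>)) * bloch_norm \<alpha> f"
proof -
  have "cmod (f w) \<le> cmod (f 0) + cmod (f w - f 0)" by (rule norm_triangle_sub)
  also have "\<dots> \<le> cmod (f 0) + bloch_seminorm \<alpha> f / (1 - \<alpha>)"
    using bloch_growth_le[OF \<alpha> f w] by simp
  also have "\<dots> \<le> bloch_norm \<alpha> f + bloch_norm \<alpha> f / (1 - \<alpha>)"
  proof -
    have "cmod (f 0) \<le> bloch_norm \<alpha> f" using bloch_seminorm_nonneg[OF f] by (simp add: bloch_norm_eq)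
    moreover have "bloch_seminorm \<alpha> f / (1 - \<alpha>) \<le> bloch_norm \<alpha> f / (1 - \<alpha>)"
      using \<alpha> by (intro divide_right_mono bloch_seminorm_le_norm) auto
    ultimately show ?thesis by linarith
  qed
  also have "\<dots> = (1 + 1 / (1 - \<alpha>)) * bloch_norm \<alpha> f" by (simp add: algebra_simps)
  finally show ?thesis .
qed

lemma deriv_power_Suc: "deriv (\<lambda>z::complex. z ^ Suc k) = (\<lambda>z. of_nat (Suc k) * z ^ k)"
  using DERIV_power[OF DERIV_ident, where n = "Suc k" and s = UNIV]
  by (intro ext DERIV_imp_deriv) (simp only: diff_Suc_Suc diff_zero mult_1_left)

lemma deriv2_power_Suc_Suc:
  "deriv (deriv (\<lambda>z::complex. z ^ Suc (Suc k))) = (\<lambda>z. of_nat (Suc (Suc k)) * of_nat (Suc k) * z ^ k)"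
  unfolding deriv_power_Suc using DERIV_cmult[OF DERIV_power[OF DERIV_ident, where n = "Suc k" and s = UNIV]]
  by (intro ext DERIV_imp_deriv) (simp only: diff_Suc_Suc diff_zero mult_1_left mult.assoc)

lemma one_in_bloch_type: "(\<lambda>z. 1) \<in> bloch_type \<alpha>" and bloch_norm_one: "bloch_norm \<alpha> (\<lambda>z. 1) = 1"
  by (auto simp: bloch_type_def bloch_norm_def)

lemma monomial_weighted_deriv_le:
  assumes \<alpha>: "0 \<le> \<alpha>" "\<alpha> \<le> 2" and z: "z \<in> unit_disc"
  shows "(1 - (cmod z)\<^sup>2) powr \<alpha> * cmod (deriv (\<lambda>z. z ^ Suc k) z) \<le> 16 * (real k + 1) powr (1 - \<alpha>)"
proof -
  have k: "real k + 1 = (real k + 1) powr \<alpha> * (real k + 1) powr (1 - \<alpha>)"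
    by (simp add: powr_add[symmetric])
  have "cmod (deriv (\<lambda>z. z ^ Suc k) z) = (real k + 1) * cmod z ^ k"
    unfolding deriv_power_Suc by (simp add: norm_mult norm_power del: of_nat_Suc)
  then have "(1 - (cmod z)\<^sup>2) powr \<alpha> * cmod (deriv (\<lambda>z. z ^ Suc k) z)
      = ((real k + 1) powr \<alpha> * cmod z ^ k * (1 - (cmod z)\<^sup>2) powr \<alpha>) * (real k + 1) powr (1 - \<alpha>)"
    by (subst (asm) k) (simp add: mult_ac)
  also have "\<dots> \<le> 16 * (real k + 1) powr (1 - \<alpha>)"
    using power_weight_le[OF \<alpha>, of "cmod z" k] z by (intro mult_right_mono) auto
  finally show ?thesis .
qed

lemma monomial_in_bloch_type:
  "0 \<le> \<alpha> \<Longrightarrow> \<alpha> \<le> 2 \<Longrightarrow> (\<lambda>z. z ^ Suc k) \<in> bloch_type \<alpha>"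
  unfolding bloch_type_def using monomial_weighted_deriv_le
  by (auto intro!: holomorphic_intros bdd_aboveI2)

lemma bloch_norm_monomial_le:
  "0 \<le> \<alpha> \<Longrightarrow> \<alpha> \<le> 2 \<Longrightarrow> bloch_norm \<alpha> (\<lambda>z. z ^ Suc k) \<le> 16 * (real k + 1) powr (1 - \<alpha>)"
  unfolding bloch_norm_def using monomial_weighted_deriv_le by (auto intro!: cSUP_least)

section \<open>Derivatives of weighted composition operators\<close>

lemma self_map_disc_in_disc: "self_map_disc \<phi> \<Longrightarrow> z \<in> unit_disc \<Longrightarrow> \<phi> z \<in> unit_disc"
  by (auto simp: self_map_disc_def image_subset_iff)

lemma has_field_derivative_mult_comp:
  assumes "(h has_field_derivative h') (at z)" "(f has_field_derivative f') (at (\<phi> z))"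
    and "(\<phi> has_field_derivative \<phi>') (at z)"
  shows "((\<lambda>z. h z * f (\<phi> z)) has_field_derivative h' * f (\<phi> z) + h z * (f' * \<phi>')) (at z)"
  using DERIV_mult[OF assms(1) DERIV_chain2[OF assms(2,3)]] by (simp add: mult_ac)

context
  fixes S T :: "complex set" and u \<phi> f :: "complex \<Rightarrow> complex"
  assumes S: "open S" and T: "open T"
    and u: "u holomorphic_on S" and \<phi>: "\<phi> holomorphic_on S" "\<phi> ` S \<subseteq> T" and f: "f holomorphic_on T"
begin

private lemma has_field_derivative_wcomp:
  assumes h: "h holomorphic_on S" and z: "z \<in> S"
  shows "((\<lambda>z. h z * f (\<phi> z)) has_field_derivative
           deriv h z * f (\<phi> z) + h z * deriv \<phi> z * deriv f (\<phi> z)) (at z)"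
  using has_field_derivative_mult_comp[OF holomorphic_derivI[OF h S z]
      holomorphic_derivI[OF f T, of "\<phi> z"] holomorphic_derivI[OF \<phi>(1) S z]] \<phi>(2) z
  by (auto simp: mult_ac)

lemma holomorphic_on_wcomp: "wcomp u \<phi> f holomorphic_on S"
  unfolding wcomp_def holomorphic_on_open[OF S] using has_field_derivative_wcomp[OF u] by blast

lemma deriv_wcomp:
  "z \<in> S \<Longrightarrow> deriv (wcomp u \<phi> f) z = deriv u z * f (\<phi> z) + u z * deriv \<phi> z * deriv f (\<phi> z)"
  unfolding wcomp_def by (rule DERIV_imp_deriv[OF has_field_derivative_wcomp[OF u]])

lemma deriv2_wcomp:
  assumes z: "z \<in> S"
  shows "deriv (deriv (wcomp u \<phi> f)) z =
    deriv (deriv u) z * f (\<phi> z) + g1 u \<phi> z * deriv f (\<phi> z) + g2 u \<phi> z * deriv (deriv f) (\<phi> z)"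
proof -
  have hu': "deriv u holomorphic_on S" and h\<phi>': "deriv \<phi> holomorphic_on S"
    using holomorphic_deriv[OF u S] holomorphic_deriv[OF \<phi>(1) S] by auto
  have hf': "deriv f holomorphic_on T" using f T by (rule holomorphic_deriv)
  have u\<phi>': "(\<lambda>z. u z * deriv \<phi> z) holomorphic_on S" using holomorphic_on_mult[OF u h\<phi>'] .
  have "deriv (deriv (wcomp u \<phi> f)) z =
      deriv (\<lambda>z. deriv u z * f (\<phi> z) + (u z * deriv \<phi> z) * deriv f (\<phi> z)) z"
    using eventually_nhds_in_open[OF S z]
    by (intro deriv_cong_ev) (auto elim!: eventually_mono simp: deriv_wcomp mult.assoc)
  also have "\<dots> = (deriv (deriv u) z * f (\<phi> z) + deriv u z * deriv \<phi> z * deriv f (\<phi> z))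
      + (deriv (\<lambda>z. u z * deriv \<phi> z) z * deriv f (\<phi> z)
         + u z * deriv \<phi> z * deriv \<phi> z * deriv (deriv f) (\<phi> z))"
    using has_field_derivative_wcomp[OF hu' z]
      has_field_derivative_mult_comp[OF holomorphic_derivI[OF u\<phi>' S z]
        holomorphic_derivI[OF hf' T, of "\<phi> z"] holomorphic_derivI[OF \<phi>(1) S z]] \<phi>(2) z
    by (intro DERIV_imp_deriv DERIV_add) (auto simp: mult_ac)
  also have "deriv (\<lambda>z. u z * deriv \<phi> z) z = deriv u z * deriv \<phi> z + u z * deriv (deriv \<phi>) z"
    using DERIV_mult[OF holomorphic_derivI[OF u S z] holomorphic_derivI[OF h\<phi>' S z]]
    by (simp add: DERIV_imp_deriv mult_ac)
  finally show ?thesis by (simp add: g1_def g2_def algebra_simps power2_eq_square)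
qed

end

section \<open>Sufficiency\<close>

lemma weighted_deriv2_wcomp_le:
  assumes \<alpha>: "0 \<le> \<alpha>" "\<alpha> < 1" and u: "u holomorphic_on unit_disc" and \<phi>: "self_map_disc \<phi>"
    and f: "f \<in> bloch_type \<alpha>" and z: "z \<in> unit_disc"
    and Mu: "(1 - (cmod z)\<^sup>2) powr \<beta> * cmod (deriv (deriv u) z) \<le> Mu"
    and B1: "weighted_quotient \<alpha> \<beta> (g1 u \<phi>) \<phi> z \<le> B1"
    and B2: "weighted_quotient (\<alpha> + 1) \<beta> (g2 u \<phi>) \<phi> z \<le> B2"
  shows "(1 - (cmod z)\<^sup>2) powr \<beta> * cmod (deriv (deriv (wcomp u \<phi> f)) z)
           \<le> (Mu * (1 + 1 / (1 - \<alpha>)) + B1 + 16 * B2) * bloch_norm \<alpha> f"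
proof -
  define v where "v = (1 - (cmod z)\<^sup>2) powr \<beta>"
  define w where "w = \<phi> z"
  define N where "N = bloch_norm \<alpha> f"
  define P where "P = (1 - (cmod w)\<^sup>2) powr \<alpha>"
  define Q where "Q = (1 - (cmod w)\<^sup>2) powr (\<alpha> + 1)"
  have w: "w \<in> unit_disc" using self_map_disc_in_disc[OF \<phi> z] by (simp add: w_def)
  have v0: "0 \<le> v" by (simp add: v_def)
  have P: "0 < P" and Q: "0 < Q" using disc_weight_pos[OF w] by (simp_all add: P_def Q_def)
  have Mu0: "0 \<le> Mu" and B10: "0 \<le> B1" and B20: "0 \<le> B2"
    using Mu B1 B2 by (auto intro: order_trans[rotated] simp: weighted_quotient_def)
  have "v * cmod (deriv (deriv u) z * f w) \<le> Mu * ((1 + 1 / (1 - \<alpha>)) * N)"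
    using mult_mono[OF Mu bloch_value_le[OF \<alpha> f w] Mu0] by (simp add: v_def N_def norm_mult mult.assoc)
  moreover have "v * cmod (g1 u \<phi> z * deriv f w) = (v * cmod (g1 u \<phi> z) / P) * (P * cmod (deriv f w))"
    using P by (simp add: norm_mult)
  moreover have "\<dots> \<le> B1 * N"
  proof (rule mult_mono)
    show "v * cmod (g1 u \<phi> z) / P \<le> B1" using B1 by (simp add: weighted_quotient_def v_def P_def w_def)
    show "P * cmod (deriv f w) \<le> N"
      using order_trans[OF bloch_seminorm_upper[OF f w] bloch_seminorm_le_norm] by (simp add: P_def N_def)
  qed (use B10 P in auto)
  moreover have "v * cmod (g2 u \<phi> z * deriv (deriv f) w) = (v * cmod (g2 u \<phi> z) / Q) * (Q * cmod (deriv (deriv f) w))"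
    using Q by (simp add: norm_mult)
  moreover have "\<dots> \<le> B2 * (16 * N)"
  proof (rule mult_mono)
    show "v * cmod (g2 u \<phi> z) / Q \<le> B2" using B2 by (simp add: weighted_quotient_def v_def Q_def w_def)
    show "Q * cmod (deriv (deriv f) w) \<le> 16 * N"
      using bloch_second_deriv_le[OF _ _ f w] bloch_seminorm_le_norm[of \<alpha> f] \<alpha> by (simp add: Q_def N_def)
  qed (use B20 Q in auto)
  moreover have "v * cmod (deriv (deriv (wcomp u \<phi> f)) z) \<le> v * cmod (deriv (deriv u) z * f w)
      + v * cmod (g1 u \<phi> z * deriv f w) + v * cmod (g2 u \<phi> z * deriv (deriv f) w)"
  proof -
    have "deriv (deriv (wcomp u \<phi> f)) z =
        deriv (deriv u) z * f w + g1 u \<phi> z * deriv f w + g2 u \<phi> z * deriv (deriv f) w"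
      unfolding w_def using \<phi> f z
      by (intro deriv2_wcomp[OF _ _ u, of unit_disc]) (auto simp: self_map_disc_def bloch_type_def)
    then show ?thesis
      using mult_left_mono[OF norm_triangle_mono[OF norm_triangle_ineq order_refl] v0]
      by (simp add: distrib_left)
  qed
  ultimately show ?thesis by (simp add: v_def N_def algebra_simps)
qed

lemma wcomp_initial_terms_le:
  assumes \<alpha>: "0 \<le> \<alpha>" "\<alpha> < 1" and u: "u holomorphic_on unit_disc" and \<phi>: "self_map_disc \<phi>"
    and f: "f \<in> bloch_type \<alpha>"
  shows "cmod (wcomp u \<phi> f 0) + cmod (deriv (wcomp u \<phi> f) 0) \<le>
    ((cmod (u 0) + cmod (deriv u 0)) * (1 + 1 / (1 - \<alpha>))
      + cmod (u 0) * cmod (deriv \<phi> 0) / (1 - (cmod (\<phi> 0))\<^sup>2) powr \<alpha>) * bloch_norm \<alpha> f"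
proof -
  define K where "K = 1 + 1 / (1 - \<alpha>)"
  define N where "N = bloch_norm \<alpha> f"
  define P where "P = (1 - (cmod (\<phi> 0))\<^sup>2) powr \<alpha>"
  have \<phi>0: "\<phi> 0 \<in> unit_disc" by (rule self_map_disc_in_disc[OF \<phi>]) simp
  have P: "0 < P" using disc_weight_pos[OF \<phi>0] by (simp add: P_def)
  have f\<phi>0: "cmod (f (\<phi> 0)) \<le> K * N"
    using bloch_value_le[OF \<alpha> f \<phi>0] by (simp add: K_def N_def)
  have "P * cmod (deriv f (\<phi> 0)) \<le> N"
    using order_trans[OF bloch_seminorm_upper[OF f \<phi>0] bloch_seminorm_le_norm] by (simp add: P_def N_def)
  then have f'\<phi>0: "cmod (deriv f (\<phi> 0)) \<le> N / P" using P by (simp add: pos_le_divide_eq mult.commute)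
  have "deriv (wcomp u \<phi> f) 0 = deriv u 0 * f (\<phi> 0) + u 0 * deriv \<phi> 0 * deriv f (\<phi> 0)"
    using \<phi> f by (intro deriv_wcomp[OF _ _ u, where T = unit_disc]) (auto simp: self_map_disc_def bloch_type_def)
  then have "cmod (deriv (wcomp u \<phi> f) 0) \<le> cmod (deriv u 0) * (K * N) + cmod (u 0) * cmod (deriv \<phi> 0) * (N / P)"
    using norm_triangle_ineq[of "deriv u 0 * f (\<phi> 0)" "u 0 * deriv \<phi> 0 * deriv f (\<phi> 0)"]
      mult_left_mono[OF f\<phi>0, of "cmod (deriv u 0)"] mult_left_mono[OF f'\<phi>0, of "cmod (u 0) * cmod (deriv \<phi> 0)"]
    by (simp add: norm_mult)
  moreover have "cmod (wcomp u \<phi> f 0) \<le> cmod (u 0) * (K * N)"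
    using mult_left_mono[OF f\<phi>0] by (simp add: wcomp_def norm_mult)
  ultimately show ?thesis by (simp add: K_def N_def P_def algebra_simps)
qed

lemma wcomp_bounded_BZ_if_quotients_bounded:
  assumes \<alpha>: "0 \<le> \<alpha>" "\<alpha> < 1" and u: "u holomorphic_on unit_disc" and \<phi>: "self_map_disc \<phi>"
    and uZ: "u \<in> zygmund_type \<beta>"
    and B1: "\<forall>z\<in>unit_disc. weighted_quotient \<alpha> \<beta> (g1 u \<phi>) \<phi> z \<le> B1"
    and B2: "\<forall>z\<in>unit_disc. weighted_quotient (\<alpha> + 1) \<beta> (g2 u \<phi>) \<phi> z \<le> B2"
  shows "wcomp_bounded_BZ \<alpha> \<beta> u \<phi>"
proof -
  obtain Mu where Mu: "\<forall>z\<in>unit_disc. (1 - (cmod z)\<^sup>2) powr \<beta> * cmod (deriv (deriv u) z) \<le> Mu"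
    using uZ unfolding zygmund_type_def bdd_above_def by auto
  define L where "L = Mu * (1 + 1 / (1 - \<alpha>)) + B1 + 16 * B2"
  define C0 where "C0 = (cmod (u 0) + cmod (deriv u 0)) * (1 + 1 / (1 - \<alpha>))
      + cmod (u 0) * cmod (deriv \<phi> 0) / (1 - (cmod (\<phi> 0))\<^sup>2) powr \<alpha>"
  show ?thesis unfolding wcomp_bounded_BZ_def
  proof (intro exI[of _ "C0 + L"] ballI conjI)
    fix f assume f: "f \<in> bloch_type \<alpha>"
    have F2: "(1 - (cmod z)\<^sup>2) powr \<beta> * cmod (deriv (deriv (wcomp u \<phi> f)) z) \<le> L * bloch_norm \<alpha> f"
      if "z \<in> unit_disc" for z
      using weighted_deriv2_wcomp_le[OF \<alpha> u \<phi> f that] Mu B1 B2 that by (simp add: L_def)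
    have "wcomp u \<phi> f holomorphic_on unit_disc"
      using \<phi> f by (intro holomorphic_on_wcomp[OF _ _ u, where T = unit_disc]) (auto simp: self_map_disc_def bloch_type_def)
    with F2 show "wcomp u \<phi> f \<in> zygmund_type \<beta>"
      unfolding zygmund_type_def by (auto intro!: bdd_aboveI2)
    have "(SUP z\<in>unit_disc. (1 - (cmod z)\<^sup>2) powr \<beta> * cmod (deriv (deriv (wcomp u \<phi> f)) z))
        \<le> L * bloch_norm \<alpha> f"
      using F2 by (intro cSUP_least) auto
    then show "zygmund_norm \<beta> (wcomp u \<phi> f) \<le> (C0 + L) * bloch_norm \<alpha> f"
      using wcomp_initial_terms_le[OF \<alpha> u \<phi> f] unfolding zygmund_norm_def C0_def
      by (simp add: algebra_simps)
  qed
qed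

section \<open>Necessity\<close>

lemma quarter_le_powr: "0 \<le> a \<Longrightarrow> a \<le> 1 \<Longrightarrow> 1/4 \<le> y \<Longrightarrow> 1/4 \<le> (y::real) powr a"
  using powr_mono'[of a 1 "1/4::real"] powr_mono2[of a "1/4" y] by simp

lemma exists_power_scale:
  fixes x :: real
  assumes x: "3/4 \<le> x" "x < 1"
  obtains n :: nat where "1 \<le> n" "1/2 \<le> x ^ (2 * n)" "1/4 \<le> (real n + 2) * (1 - x\<^sup>2)"
proof -
  define t where "t = 1 - x"
  have t: "0 < t" "t \<le> 1/4" using x by (auto simp: t_def)
  obtain n :: nat where n1: "real n * t \<le> 1/4" and n2: "1/4 \<le> (real n + 1) * t" and n0: "1 \<le> n"
    using exists_nat_mult_between[of t "1/4"] t by auto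
  have "1 - real (2 * n) * t \<le> x ^ (2 * n)"
    using Bernoulli_inequality[of "-t" "2 * n"] t by (simp add: t_def algebra_simps)
  then have "1/2 \<le> x ^ (2 * n)" using n1 by simp
  moreover have "t \<le> 1 - x\<^sup>2" using x by (simp add: t_def power2_eq_square mult_left_le_one_le)
  then have "(real n + 1) * t \<le> (real n + 2) * (1 - x\<^sup>2)" using t by (intro mult_mono) auto
  ultimately show thesis using that n0 n2 by simp
qed

context
  fixes a b W :: complex and K \<alpha> :: real
  assumes \<alpha>: "0 \<le> \<alpha>" "\<alpha> \<le> 1" and W: "cmod W < 1"
    and a: "cmod a \<le> K"
    and H: "\<And>k::nat. (real k + 2) powr \<alpha> * cmod W ^ k * cmod (a * W + of_nat (Suc k) * b) \<le> K"
begin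

private lemma coefficient_separation_near_centre:
  assumes "cmod W < 3/4"
  shows "cmod a \<le> 56 * K * (1 - (cmod W)\<^sup>2) powr \<alpha>"
    and "cmod b \<le> 192 * K * (1 - (cmod W)\<^sup>2) powr (\<alpha> + 1)"
proof -
  define q where "q = 1 - (cmod W)\<^sup>2"
  have K: "0 \<le> K" using a norm_ge_zero order_trans by blast
  have "(cmod W)\<^sup>2 \<le> (3/4)\<^sup>2" using assms by (intro power_mono) auto
  then have q4: "1/4 \<le> q" by (simp add: q_def power2_eq_square)
  have P4: "1/4 \<le> q powr \<alpha>" using quarter_le_powr[OF \<alpha> q4] .
  have Q16: "1/16 \<le> q powr (\<alpha> + 1)"
    using mult_mono[OF P4 q4] q4 by (simp add: powr_add)
  show "cmod a \<le> 56 * K * q powr \<alpha>" using a mult_left_mono[OF P4, of "56 * K"] K by simp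
  have "1 \<le> (2::real) powr \<alpha>" using \<alpha> by (simp add: ge_one_powr_ge_zero)
  then have "cmod (a * W + b) \<le> K"
    using H[of 0] mult_right_mono[of 1 "2 powr \<alpha>" "cmod (a * W + b)"] by simp
  moreover have "cmod (a * W) \<le> K"
    using mult_mono[OF a, of "cmod W" 1] W K by (simp add: norm_mult)
  ultimately have "cmod b \<le> 2 * K"
    using norm_triangle_ineq4[of "a * W + b" "a * W"] by simp
  then show "cmod b \<le> 192 * K * q powr (\<alpha> + 1)" using mult_left_mono[OF Q16, of "192 * K"] K by simp
qed

text \<open>Near the boundary, compare the \<open>n\<close>-th and \<open>2n\<close>-th estimate, with \<open>n \<approx> 1/(4(1 - |W|))\<close>:
  their difference isolates \<open>b\<close>.\<close>
private lemma coefficient_separation_near_boundary: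
  assumes x: "3/4 \<le> cmod W"
  shows "cmod a \<le> 56 * K * (1 - (cmod W)\<^sup>2) powr \<alpha>"
    and "cmod b \<le> 192 * K * (1 - (cmod W)\<^sup>2) powr (\<alpha> + 1)"
proof -
  define x where "x = cmod W"
  define q where "q = 1 - x\<^sup>2"
  have x1: "x < 1" using W by (simp add: x_def)
  obtain n :: nat where n: "1 \<le> n" and x2n: "1/2 \<le> x ^ (2 * n)" and nq: "1/4 \<le> (real n + 2) * q"
    using exists_power_scale[OF x[folded x_def] x1] by (auto simp: q_def)
  have xn: "1/2 \<le> x ^ n" using x2n power_decreasing[of n "2 * n" x] x x1 by (simp add: x_def)
  have q: "0 < q" using x1 x by (simp add: q_def x_def power_less_one_iff abs_square_less_1)
  define E where "E = (real n + 2) powr \<alpha>"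
  define A1 where "A1 = cmod (a * W + of_nat (Suc n) * b)"
  define A2 where "A2 = cmod (a * W + of_nat (Suc (2 * n)) * b)"
  have E: "0 < E" by (simp add: E_def)
  have half: "c * A \<le> 2 * K" if "c * y * A \<le> K" "1/2 \<le> y" "0 \<le> A" "0 \<le> c" for c y A
    using that mult_left_mono[OF that(2), of "c * A"] by (simp add: mult_ac)
  have EA1: "E * A1 \<le> 2 * K"
    using H[of n] xn by (intro half[of _ "x ^ n"]) (simp_all add: E_def A1_def x_def mult_ac)
  have "E * A2 \<le> (real (2 * n) + 2) powr \<alpha> * A2" using \<alpha> by (simp add: E_def A2_def powr_mono2 mult_right_mono)
  also have "\<dots> \<le> 2 * K"
    using H[of "2 * n"] x2n by (intro half[of _ "x ^ (2 * n)"]) (simp_all add: A2_def x_def mult_ac)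
  finally have EA2: "E * A2 \<le> 2 * K" .
  have "real n * cmod b \<le> A1 + A2"
    using norm_triangle_ineq4[of "a * W + of_nat (Suc (2 * n)) * b" "a * W + of_nat (Suc n) * b"]
    by (simp add: A1_def A2_def norm_mult algebra_simps)
  then have "real n * cmod b * E \<le> (A1 + A2) * E" using E by (intro mult_right_mono) auto
  then have nbE: "real n * cmod b * E \<le> 4 * K" using EA1 EA2 by (simp add: algebra_simps)
  have "cmod (of_nat (Suc n) :: complex) = real n + 1" by (simp only: norm_of_nat)
  then have "x * cmod a \<le> A1 + (real n + 1) * cmod b"
    using norm_triangle_ineq4[of "a * W + of_nat (Suc n) * b" "of_nat (Suc n) * b"]
    by (simp add: A1_def x_def norm_mult mult.commute)
  then have "x * cmod a * E \<le> (A1 + (real n + 1) * cmod b) * E" using E by (intro mult_right_mono) auto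
  then have "x * cmod a * E \<le> 2 * K + (real n + 1) * cmod b * E" using EA1 by (simp add: algebra_simps)
  also have "(real n + 1) * cmod b * E \<le> 2 * (real n * cmod b * E)"
    using n E mult_right_mono[of "real n + 1" "2 * real n" "cmod b * E"] by (simp add: mult_ac)
  finally have "x * cmod a * E \<le> 10 * K" using nbE by linarith
  moreover have "(3/4) * (cmod a * E) \<le> x * cmod a * E"
    using mult_right_mono[OF x, of "cmod a * E"] E by (simp add: x_def mult_ac)
  ultimately have aE: "cmod a * E \<le> 14 * K" using a norm_ge_zero[of a] by linarith
  have EP: "1/4 \<le> E * q powr \<alpha>" using quarter_le_powr[OF \<alpha> nq] q by (simp add: E_def powr_mult)
  show "cmod a \<le> 56 * K * (1 - (cmod W)\<^sup>2) powr \<alpha>"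
    using mult_left_mono[OF EP, of "cmod a"] mult_right_mono[OF aE, of "q powr \<alpha>"]
    by (simp add: q_def x_def mult_ac)
  have "(real n + 2) * cmod b * E \<le> 3 * (real n * cmod b * E)"
    using n E mult_right_mono[of "real n + 2" "3 * real n" "cmod b * E"] by (simp add: mult_ac)
  then have bE: "(real n + 2) * cmod b * E \<le> 12 * K" using nbE by linarith
  have "1/16 \<le> (real n + 2) * E * q powr (\<alpha> + 1)"
    using mult_mono[OF EP nq] q E by (simp add: powr_add mult_ac)
  then have "cmod b \<le> cmod b * (16 * ((real n + 2) * E * q powr (\<alpha> + 1)))"
    using mult_left_mono[of 1 _ "cmod b"] by simp
  also have "\<dots> = 16 * q powr (\<alpha> + 1) * ((real n + 2) * cmod b * E)" by (simp add: mult_ac)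
  also have "\<dots> \<le> 16 * q powr (\<alpha> + 1) * (12 * K)" using bE by (intro mult_left_mono) auto
  finally show "cmod b \<le> 192 * K * (1 - (cmod W)\<^sup>2) powr (\<alpha> + 1)" by (simp add: q_def x_def mult_ac)
qed

lemma coefficient_separation:
  shows "cmod a \<le> 56 * K * (1 - (cmod W)\<^sup>2) powr \<alpha>"
    and "cmod b \<le> 192 * K * (1 - (cmod W)\<^sup>2) powr (\<alpha> + 1)"
  using coefficient_separation_near_centre coefficient_separation_near_boundary
  by (cases "cmod W < 3/4"; simp)+

end

lemma zygmund_weighted_deriv2_le_norm:
  assumes "F \<in> zygmund_type \<beta>" "z \<in> unit_disc"
  shows "(1 - (cmod z)\<^sup>2) powr \<beta> * cmod (deriv (deriv F) z) \<le> zygmund_norm \<beta> F"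
proof -
  have "(1 - (cmod z)\<^sup>2) powr \<beta> * cmod (deriv (deriv F) z)
      \<le> (SUP z\<in>unit_disc. (1 - (cmod z)\<^sup>2) powr \<beta> * cmod (deriv (deriv F) z))"
    using assms unfolding zygmund_type_def by (auto intro: cSUP_upper)
  then show ?thesis unfolding zygmund_norm_def
    using norm_ge_zero[of "F 0"] norm_ge_zero[of "deriv F 0"] by linarith
qed

lemma zygmund_type_if_wcomp_bounded: "wcomp_bounded_BZ \<alpha> \<beta> u \<phi> \<Longrightarrow> u \<in> zygmund_type \<beta>"
  using one_in_bloch_type unfolding wcomp_bounded_BZ_def by (fastforce simp: wcomp_def)

lemma deriv2_wcomp_monomial:
  assumes u: "u holomorphic_on unit_disc" and \<phi>: "self_map_disc \<phi>" and z: "z \<in> unit_disc"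
  shows "deriv (deriv (wcomp u \<phi> (\<lambda>z. z ^ Suc (Suc k)))) z = deriv (deriv u) z * \<phi> z ^ Suc (Suc k)
           + of_nat (Suc (Suc k)) * \<phi> z ^ k * (g1 u \<phi> z * \<phi> z + of_nat (Suc k) * g2 u \<phi> z)"
proof -
  have "deriv (deriv (wcomp u \<phi> (\<lambda>z. z ^ Suc (Suc k)))) z =
      deriv (deriv u) z * \<phi> z ^ Suc (Suc k) + g1 u \<phi> z * deriv (\<lambda>z. z ^ Suc (Suc k)) (\<phi> z)
      + g2 u \<phi> z * deriv (deriv (\<lambda>z. z ^ Suc (Suc k))) (\<phi> z)"
    using \<phi> by (intro deriv2_wcomp[OF _ _ u _ _ _ z, where T = unit_disc]) (auto simp: self_map_disc_def intro!: holomorphic_intros)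
  then show ?thesis unfolding deriv2_power_Suc_Suc unfolding deriv_power_Suc by (simp add: algebra_simps)
qed

lemma deriv2_wcomp_ident:
  assumes u: "u holomorphic_on unit_disc" and \<phi>: "self_map_disc \<phi>" and z: "z \<in> unit_disc"
  shows "deriv (deriv (wcomp u \<phi> (\<lambda>z. z))) z = deriv (deriv u) z * \<phi> z + g1 u \<phi> z"
  using \<phi> deriv2_wcomp[OF _ _ u _ _ _ z, where T = unit_disc and \<phi> = \<phi> and f = "\<lambda>z. z"]
  by (simp add: self_map_disc_def)

context
  fixes \<alpha> \<beta> C :: real and u \<phi> :: "complex \<Rightarrow> complex"
  assumes \<alpha>: "0 \<le> \<alpha>" "\<alpha> \<le> 1" and u: "u holomorphic_on unit_disc" and \<phi>: "self_map_disc \<phi>"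
    and C: "\<And>f. f \<in> bloch_type \<alpha> \<Longrightarrow>
      wcomp u \<phi> f \<in> zygmund_type \<beta> \<and> zygmund_norm \<beta> (wcomp u \<phi> f) \<le> C * bloch_norm \<alpha> f"
begin

private lemma weighted_deriv2_u_le:
  "z \<in> unit_disc \<Longrightarrow> (1 - (cmod z)\<^sup>2) powr \<beta> * cmod (deriv (deriv u) z) \<le> C"
  using C[OF one_in_bloch_type] bloch_norm_one zygmund_weighted_deriv2_le_norm[of u \<beta> z]
  by (simp add: wcomp_def)

private lemma operator_bound_nonneg: "0 \<le> C"
  using weighted_deriv2_u_le[of 0] by (auto intro: order_trans[rotated])

private lemma weighted_deriv2_wcomp_monomial_le:
  assumes z: "z \<in> unit_disc"
  shows "(1 - (cmod z)\<^sup>2) powr \<beta> * cmod (deriv (deriv (wcomp u \<phi> (\<lambda>z. z ^ Suc k))) z)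
           \<le> 16 * C * (real k + 1) powr (1 - \<alpha>)"
proof -
  have "(\<lambda>z. z ^ Suc k) \<in> bloch_type \<alpha>" using \<alpha> by (intro monomial_in_bloch_type) auto
  note bounded = C[OF this]
  have "(1 - (cmod z)\<^sup>2) powr \<beta> * cmod (deriv (deriv (wcomp u \<phi> (\<lambda>z. z ^ Suc k))) z)
      \<le> zygmund_norm \<beta> (wcomp u \<phi> (\<lambda>z. z ^ Suc k))"
    using bounded z by (intro zygmund_weighted_deriv2_le_norm) auto
  also have "\<dots> \<le> C * bloch_norm \<alpha> (\<lambda>z. z ^ Suc k)" using bounded by blast
  also have "\<dots> \<le> C * (16 * (real k + 1) powr (1 - \<alpha>))"
    using bloch_norm_monomial_le \<alpha> operator_bound_nonneg by (intro mult_left_mono) auto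
  finally show ?thesis by (simp add: mult_ac)
qed

private lemma weighted_g1_le:
  assumes z: "z \<in> unit_disc"
  shows "(1 - (cmod z)\<^sup>2) powr \<beta> * cmod (g1 u \<phi> z) \<le> 17 * C"
proof -
  define v where "v = (1 - (cmod z)\<^sup>2) powr \<beta>"
  define D where "D = deriv (deriv u) z * \<phi> z"
  have "v * cmod (D + g1 u \<phi> z) \<le> 16 * C"
    using weighted_deriv2_wcomp_monomial_le[OF z, of 0] deriv2_wcomp_ident[OF u \<phi> z] by (simp add: v_def D_def)
  moreover have "v * cmod D \<le> C"
    using weighted_deriv2_u_le[OF z] self_map_disc_in_disc[OF \<phi> z] operator_bound_nonneg
      mult_mono[of "v * cmod (deriv (deriv u) z)" C "cmod (\<phi> z)" 1]
    by (simp add: v_def D_def norm_mult mult.assoc)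
  moreover have "v * cmod (g1 u \<phi> z) \<le> v * cmod (D + g1 u \<phi> z) + v * cmod D"
    using mult_left_mono[OF norm_triangle_ineq4[of "D + g1 u \<phi> z" D], of v] by (simp add: v_def algebra_simps)
  ultimately show ?thesis by (simp add: v_def)
qed

private lemma weighted_monomial_coefficient_le:
  assumes z: "z \<in> unit_disc"
  shows "(real k + 2) powr \<alpha> * cmod (\<phi> z) ^ k *
           ((1 - (cmod z)\<^sup>2) powr \<beta> * cmod (g1 u \<phi> z * \<phi> z + of_nat (Suc k) * g2 u \<phi> z)) \<le> 17 * C"
proof -
  define v where "v = (1 - (cmod z)\<^sup>2) powr \<beta>"
  define W where "W = \<phi> z"
  define T where "T = of_nat (Suc (Suc k)) * W ^ k * (g1 u \<phi> z * W + of_nat (Suc k) * g2 u \<phi> z)"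
  define D where "D = deriv (deriv u) z * W ^ Suc (Suc k)"
  have W: "cmod W \<le> 1" using self_map_disc_in_disc[OF \<phi> z] by (simp add: W_def)
  have p1: "1 \<le> (real k + 2) powr (1 - \<alpha>)" using \<alpha> by (intro ge_one_powr_ge_zero) auto
  have "v * cmod (D + T) \<le> 16 * C * (real k + 2) powr (1 - \<alpha>)"
    using weighted_deriv2_wcomp_monomial_le[OF z, of "Suc k"] deriv2_wcomp_monomial[OF u \<phi> z, of k]
    by (simp add: v_def D_def T_def W_def add_ac)
  moreover have "v * cmod D \<le> C * (real k + 2) powr (1 - \<alpha>)"
  proof -
    have "v * cmod D \<le> C * 1"
      using weighted_deriv2_u_le[OF z] W operator_bound_nonneg power_le_one[of "cmod W"]
        mult_mono[of "v * cmod (deriv (deriv u) z)" C "cmod W ^ Suc (Suc k)" 1]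
      by (simp add: v_def D_def norm_mult norm_power mult.assoc del: power_Suc)
    also have "\<dots> \<le> C * (real k + 2) powr (1 - \<alpha>)" using p1 operator_bound_nonneg by (intro mult_left_mono) auto
    finally show ?thesis .
  qed
  moreover have "v * cmod T \<le> v * cmod (D + T) + v * cmod D"
    using mult_left_mono[OF norm_triangle_ineq4[of "D + T" D], of v] by (simp add: v_def algebra_simps)
  ultimately have "v * cmod T \<le> 17 * C * (real k + 2) powr (1 - \<alpha>)" by simp
  moreover have "cmod (of_nat (Suc (Suc k)) :: complex) = real k + 2" by (simp only: norm_of_nat)
  ultimately have "(real k + 2) * (v * cmod W ^ k * cmod (g1 u \<phi> z * W + of_nat (Suc k) * g2 u \<phi> z))
      \<le> 17 * C * (real k + 2) powr (1 - \<alpha>)"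
    by (simp add: T_def norm_mult norm_power mult_ac)
  then have "(real k + 2) * ((real k + 2) powr \<alpha> * cmod W ^ k * (v * cmod (g1 u \<phi> z * W + of_nat (Suc k) * g2 u \<phi> z)))
      \<le> (real k + 2) * (17 * C)"
    using mult_left_mono[of _ _ "(real k + 2) powr \<alpha>"] by (fastforce simp: powr_add[symmetric] mult_ac)
  then show ?thesis unfolding v_def W_def by (rule mult_left_le_imp_le) simp
qed

lemma weighted_quotients_le_if_wcomp_bounded:
  assumes z: "z \<in> unit_disc"
  shows "weighted_quotient \<alpha> \<beta> (g1 u \<phi>) \<phi> z \<le> 56 * (17 * C)"
    and "weighted_quotient (\<alpha> + 1) \<beta> (g2 u \<phi>) \<phi> z \<le> 192 * (17 * C)"
proof -
  define v where "v = (1 - (cmod z)\<^sup>2) powr \<beta>"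
  define a where "a = of_real v * g1 u \<phi> z"
  define b where "b = of_real v * g2 u \<phi> z"
  have v: "0 \<le> v" by (simp add: v_def)
  have W: "\<phi> z \<in> unit_disc" by (rule self_map_disc_in_disc[OF \<phi> z])
  have a: "cmod a \<le> 17 * C" using weighted_g1_le[OF z] v by (simp add: a_def v_def norm_mult)
  have H: "(real k + 2) powr \<alpha> * cmod (\<phi> z) ^ k * cmod (a * \<phi> z + of_nat (Suc k) * b) \<le> 17 * C" for k
  proof -
    have "a * \<phi> z + of_nat (Suc k) * b = of_real v * (g1 u \<phi> z * \<phi> z + of_nat (Suc k) * g2 u \<phi> z)"
      by (simp add: a_def b_def algebra_simps)
    then show ?thesis using weighted_monomial_coefficient_le[OF z, of k] v
      by (simp add: norm_mult v_def)
  qed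
  have "cmod (\<phi> z) < 1" using W by simp
  note separation = coefficient_separation[OF \<alpha> this a H]
  show "weighted_quotient \<alpha> \<beta> (g1 u \<phi>) \<phi> z \<le> 56 * (17 * C)"
    and "weighted_quotient (\<alpha> + 1) \<beta> (g2 u \<phi>) \<phi> z \<le> 192 * (17 * C)"
    using separation disc_weight_pos[OF W] v
    by (simp_all add: weighted_quotient_def a_def b_def v_def norm_mult pos_divide_le_eq)
qed

end

lemma wcomp_bounded_BZ_iff_quotient_sups_finite:
  assumes \<alpha>: "0 \<le> \<alpha>" "\<alpha> < 1" and u: "u holomorphic_on unit_disc" and \<phi>: "self_map_disc \<phi>"
  shows "wcomp_bounded_BZ \<alpha> \<beta> u \<phi> \<longleftrightarrow>
    u \<in> zygmund_type \<beta> \<and> quotient_sup \<alpha> \<beta> (g1 u \<phi>) \<phi> < \<infinity> \<and> quotient_sup (\<alpha> + 1) \<beta> (g2 u \<phi>) \<phi> < \<infinity>"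
    (is "_ \<longleftrightarrow> _ \<and> ?S1 < \<infinity> \<and> ?S2 < \<infinity>")
proof
  assume bdd: "wcomp_bounded_BZ \<alpha> \<beta> u \<phi>"
  then obtain C where C: "\<And>f. f \<in> bloch_type \<alpha> \<Longrightarrow> wcomp u \<phi> f \<in> zygmund_type \<beta> \<and>
      zygmund_norm \<beta> (wcomp u \<phi> f) \<le> C * bloch_norm \<alpha> f"
    unfolding wcomp_bounded_BZ_def by blast
  note bounds = weighted_quotients_le_if_wcomp_bounded[OF \<alpha>(1) less_imp_le[OF \<alpha>(2)] u \<phi> C]
  have "?S1 < \<infinity>" "?S2 < \<infinity>"
    unfolding quotient_sup_less_infinity_iff using bounds by blast+
  with zygmund_type_if_wcomp_bounded[OF bdd] show "u \<in> zygmund_type \<beta> \<and> ?S1 < \<infinity> \<and> ?S2 < \<infinity>" by blast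
next
  assume "u \<in> zygmund_type \<beta> \<and> ?S1 < \<infinity> \<and> ?S2 < \<infinity>"
  then show "wcomp_bounded_BZ \<alpha> \<beta> u \<phi>"
    unfolding quotient_sup_less_infinity_iff
    using wcomp_bounded_BZ_if_quotients_bounded[OF \<alpha> u \<phi>] by blast
qed

theorem theorem3p1:
  fixes \<alpha> \<beta> :: real
  assumes "0 < \<alpha>" "\<alpha> < 1" "0 < \<beta>"
  shows "(\<exists>C>0. \<forall>u \<phi>. u holomorphic_on unit_disc \<and> self_map_disc \<phi> \<longrightarrow>
            S1 \<alpha> \<beta> u \<phi> \<le> ereal C * T1 \<alpha> \<beta> u \<phi> \<and> T1 \<alpha> \<beta> u \<phi> \<le> ereal C * S1 \<alpha> \<beta> u \<phi> \<and>
            S2 \<alpha> \<beta> u \<phi> \<le> ereal C * T2 \<alpha> \<beta> u \<phi> \<and> T2 \<alpha> \<beta> u \<phi> \<le> ereal C * S2 \<alpha> \<beta> u \<phi>)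
       \<and> (\<forall>u \<phi>. u holomorphic_on unit_disc \<and> self_map_disc \<phi> \<longrightarrow>
            (wcomp_bounded_BZ \<alpha> \<beta> u \<phi> \<longleftrightarrow>
               u \<in> zygmund_type \<beta> \<and>
               S1 \<alpha> \<beta> u \<phi> < \<infinity> \<and> T1 \<alpha> \<beta> u \<phi> < \<infinity> \<and>
               S2 \<alpha> \<beta> u \<phi> < \<infinity> \<and> T2 \<alpha> \<beta> u \<phi> < \<infinity>))"
proof -
  have \<alpha>: "0 \<le> \<alpha>" "\<alpha> \<le> 2" "0 \<le> \<alpha> + 1" "\<alpha> + 1 \<le> 2" using assms by auto
  have equiv: "S1 \<alpha> \<beta> u \<phi> \<le> ereal 16 * T1 \<alpha> \<beta> u \<phi> \<and> T1 \<alpha> \<beta> u \<phi> \<le> ereal 16 * S1 \<alpha> \<beta> u \<phi> \<and>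
      S2 \<alpha> \<beta> u \<phi> \<le> ereal 16 * T2 \<alpha> \<beta> u \<phi> \<and> T2 \<alpha> \<beta> u \<phi> \<le> ereal 16 * S2 \<alpha> \<beta> u \<phi>"
    if "self_map_disc \<phi>" for u \<phi>
    using that quotient_sup_le_power_sup[OF \<alpha>(1,2)] power_sup_le_quotient_sup[OF \<alpha>(1,2)]
      quotient_sup_le_power_sup[OF \<alpha>(3,4)] power_sup_le_quotient_sup[OF \<alpha>(3,4)]
    by (simp add: self_map_disc_def S1_eq_quotient_sup S2_eq_quotient_sup T1_eq_power_sup T2_eq_power_sup)
  have finite_iff: "S < \<infinity> \<longleftrightarrow> T < \<infinity>" if "S \<le> ereal 16 * T" "T \<le> ereal 16 * S" for S T :: ereal
    using that by (cases S; cases T) auto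
  show ?thesis
  proof (intro conjI exI[of _ 16] allI impI)
    fix u \<phi> assume "u holomorphic_on unit_disc \<and> self_map_disc \<phi>"
    with equiv[of \<phi> u] show "wcomp_bounded_BZ \<alpha> \<beta> u \<phi> \<longleftrightarrow> u \<in> zygmund_type \<beta> \<and>
        S1 \<alpha> \<beta> u \<phi> < \<infinity> \<and> T1 \<alpha> \<beta> u \<phi> < \<infinity> \<and> S2 \<alpha> \<beta> u \<phi> < \<infinity> \<and> T2 \<alpha> \<beta> u \<phi> < \<infinity>"
      using wcomp_bounded_BZ_iff_quotient_sups_finite[of \<alpha> u \<phi> \<beta>] finite_iff assms
      by (auto simp: S1_eq_quotient_sup S2_eq_quotient_sup)
  qed (use equiv in auto)
qed

end
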